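(* Let $n\ge2$, let $\mathbf{p}=(p_1,\dots,p_n)$ be positive weights with $\sum p_i=1$ and let $\mathbf{x}=(x_1,\dots,x_n)$ be positive reals, not all equal. Define, for $s\in\mathbb{R}$, $$\chi_s(\mathbf p,\mathbf x)=\begin{cases}\dfrac{\sum p_i x_i^s-\left(\sum p_i x_i\right)^s}{s(s-1)}, & s\neq 0,1,\\[2mm] \log\left(\sum p_i x_i\right)-\sum p_i\log x_i, & s=0,\\[1mm] \sum p_i x_i\log x_i-\left(\sum p_ix_i\right)\log\left(\sum p_i x_i\right), & s=1.\end{cases}$$ Then $\chi_s(\mathbf p,\mathbf x)>0$ for all $s$, and the function $s\mapsto \chi_{s+1}(\mathbf p,\mathbf x)/\chi_s(\mathbf p,\mathbf x)$ is monotone increasing on $\mathbb{R}$. Equivalently, for every $s\in\mathbb{R}$ and $r>0$, $$\chi_s(\mathbf p,\mathbf x)\,\chi_{s+r+1}(\mathbf p,\mathbf x)\ge \chi_{s+1}(\mathbf p,\mathbf x)\,\chi_{s+r}(\mathbf p,\mathbf x).$$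
   Context: All sums run over $i=1,\dots,n$. *)

theory Defs
  imports Complex_Main
begin

definition chi :: "nat \<Rightarrow> (nat \<Rightarrow> real) \<Rightarrow> (nat \<Rightarrow> real) \<Rightarrow> real \<Rightarrow> real" where
  "chi n p x s =
    (if s = 0 then ln (\<Sum>i=1..n. p i * x i) - (\<Sum>i=1..n. p i * ln (x i))
     else if s = 1 then (\<Sum>i=1..n. p i * x i * ln (x i))
                        - (\<Sum>i=1..n. p i * x i) * ln (\<Sum>i=1..n. p i * x i)
     else ((\<Sum>i=1..n. p i * x i powr s) - (\<Sum>i=1..n. p i * x i) powr s) / (s * (s - 1)))"

end

theory Submission
  imports Defs "HOL-Analysis.Convex"
begin

(* With the kernel  phi_s(y) = y^s/(s(s-1))  (and its limits  -ln y  for s = 0,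
   y ln y  for s = 1), whose second derivative is  y^(s-2),  the quantity chi_s(p,x) is the
   Jensen gap  sum p_i phi_s(x_i) - phi_s(sum p_i x_i)  of a strictly convex function, hence
   positive when the x_i are not all equal.  Moreover s |-> chi_s is log-convex: for
   0 < l < 1 and m = l a + (1-l) b, suitable weights A, B > 0 with A^l B^(1-l) = 1 make
   l A phi_a + (1-l) B phi_b - phi_m convex (weighted AM-GM on the second derivatives), and
   Jensen for this combination gives  chi_m <= chi_a^l chi_b^(1-l). *)

section \<open>Jensen's inequality via second derivatives\<close>

lemma tangent_gap_second_derivative:
  fixes g g' g'' :: "real \<Rightarrow> real"
  assumes d1: "\<And>y. y > 0 \<Longrightarrow> (g has_real_derivative g' y) (at y)"
    and d2: "\<And>y. y > 0 \<Longrightarrow> (g' has_real_derivative g'' y) (at y)"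
    and c: "c > 0" and y: "y > 0" and ne: "y \<noteq> c"
  shows "\<exists>w>0. \<exists>k>0. g y - g c - g' c * (y - c) = k * g'' w"
proof (cases "c < y")
  case True
  obtain z where z: "c < z" "z < y" "g y - g c = (y - c) * g' z"
    using MVT2[OF True, of g g'] d1 c by force
  obtain w where w: "c < w" "w < z" "g' z - g' c = (z - c) * g'' w"
    using MVT2[OF z(1), of g' g''] d2 c by force
  have "g y - g c - g' c * (y - c) = (y - c) * (g' z - g' c)"
    using z(3) by (simp add: algebra_simps)
  also have "\<dots> = ((y - c) * (z - c)) * g'' w" using w(3) by simp
  finally have "g y - g c - g' c * (y - c) = ((y - c) * (z - c)) * g'' w" .
  moreover have "(y - c) * (z - c) > 0" using True z by simp
  ultimately show ?thesis using w c by (intro exI[of _ w] conjI exI[of _ "(y - c) * (z - c)"]) auto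
next
  case False
  hence lt: "y < c" using ne by simp
  obtain z where z: "y < z" "z < c" "g c - g y = (c - y) * g' z"
    using MVT2[OF lt, of g g'] d1 y by force
  obtain w where w: "z < w" "w < c" "g' c - g' z = (c - z) * g'' w"
    using MVT2[OF z(2), of g' g''] d2 y z by force
  have "g y - g c - g' c * (y - c) = (c - y) * (g' c - g' z)"
    using z(3) by (simp add: algebra_simps)
  also have "\<dots> = ((c - y) * (c - z)) * g'' w" using w(3) by simp
  finally have "g y - g c - g' c * (y - c) = ((c - y) * (c - z)) * g'' w" .
  moreover have "(c - y) * (c - z) > 0" using lt z by simp
  ultimately show ?thesis using w y z by (intro exI[of _ w] conjI exI[of _ "(c - y) * (c - z)"]) auto
qed

lemma above_tangent:
  fixes g g' g'' :: "real \<Rightarrow> real"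
  assumes d1: "\<And>y. y > 0 \<Longrightarrow> (g has_real_derivative g' y) (at y)"
    and d2: "\<And>y. y > 0 \<Longrightarrow> (g' has_real_derivative g'' y) (at y)"
    and convex: "\<And>y. y > 0 \<Longrightarrow> g'' y \<ge> 0"
    and c: "c > 0" and y: "y > 0"
  shows "g c + g' c * (y - c) \<le> g y"
proof (cases "y = c")
  case False
  then obtain w k where "w > 0" "k > 0" "g y - g c - g' c * (y - c) = k * g'' w"
    using tangent_gap_second_derivative[OF d1 d2 c y] by blast
  moreover have "k * g'' w \<ge> 0" using convex \<open>w > 0\<close> \<open>k > 0\<close> by simp
  ultimately show ?thesis by linarith
qed simp

lemma strictly_above_tangent:
  fixes g g' g'' :: "real \<Rightarrow> real"
  assumes d1: "\<And>y. y > 0 \<Longrightarrow> (g has_real_derivative g' y) (at y)"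
    and d2: "\<And>y. y > 0 \<Longrightarrow> (g' has_real_derivative g'' y) (at y)"
    and strict: "\<And>y. y > 0 \<Longrightarrow> g'' y > 0"
    and c: "c > 0" and y: "y > 0" and ne: "y \<noteq> c"
  shows "g c + g' c * (y - c) < g y"
proof -
  obtain w k where "w > 0" "k > 0" "g y - g c - g' c * (y - c) = k * g'' w"
    using tangent_gap_second_derivative[OF d1 d2 c y ne] by blast
  moreover have "k * g'' w > 0" using strict \<open>w > 0\<close> \<open>k > 0\<close> by simp
  ultimately show ?thesis by linarith
qed

lemma weighted_mean_affine:
  fixes p x :: "'i \<Rightarrow> real"
  assumes ps: "sum p A = 1" and m: "m = (\<Sum>i\<in>A. p i * x i)"
  shows "(\<Sum>i\<in>A. p i * (a + b * (x i - m))) = a"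
proof -
  have "(\<Sum>i\<in>A. p i * (a + b * (x i - m))) = a * sum p A + b * ((\<Sum>i\<in>A. p i * x i) - m * sum p A)"
    by (simp add: algebra_simps sum.distrib sum_subtractf sum_distrib_left)
  then show ?thesis using ps m by simp
qed

lemma weighted_mean_pos:
  fixes p x :: "'i \<Rightarrow> real"
  assumes "finite A" "A \<noteq> {}" "\<And>i. i \<in> A \<Longrightarrow> p i > 0" "\<And>i. i \<in> A \<Longrightarrow> x i > 0"
  shows "(\<Sum>i\<in>A. p i * x i) > 0"
  using assms by (intro sum_pos) auto

text \<open>Jensen's inequality for a function with nonnegative second derivative on (0,oo):
  each g(x_i) dominates the tangent line at the mean, and the tangent averages to g(mean).\<close>
lemma jensen_second_derivative:
  fixes g g' g'' :: "real \<Rightarrow> real" and p x :: "'i \<Rightarrow> real"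
  assumes d1: "\<And>y. y > 0 \<Longrightarrow> (g has_real_derivative g' y) (at y)"
    and d2: "\<And>y. y > 0 \<Longrightarrow> (g' has_real_derivative g'' y) (at y)"
    and convex: "\<And>y. y > 0 \<Longrightarrow> g'' y \<ge> 0"
    and A: "finite A" "A \<noteq> {}"
    and pp: "\<And>i. i \<in> A \<Longrightarrow> p i > 0" and ps: "sum p A = 1"
    and xp: "\<And>i. i \<in> A \<Longrightarrow> x i > 0"
  shows "g (\<Sum>i\<in>A. p i * x i) \<le> (\<Sum>i\<in>A. p i * g (x i))"
proof -
  define m where "m = (\<Sum>i\<in>A. p i * x i)"
  have mpos: "m > 0" unfolding m_def using weighted_mean_pos[OF A pp xp] .
  have "g m = (\<Sum>i\<in>A. p i * (g m + g' m * (x i - m)))"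
    using weighted_mean_affine[OF ps m_def] by simp
  also have "\<dots> \<le> (\<Sum>i\<in>A. p i * g (x i))"
    using above_tangent[OF d1 d2 convex mpos xp] pp
    by (intro sum_mono mult_left_mono) (auto simp: less_imp_le)
  finally show ?thesis unfolding m_def .
qed

text \<open>Strict Jensen: with g'' > 0 and not all x_i equal, some x_i differs from the mean,
  and its term is strictly above the tangent.\<close>
lemma jensen_second_derivative_strict:
  fixes g g' g'' :: "real \<Rightarrow> real" and p x :: "'i \<Rightarrow> real"
  assumes d1: "\<And>y. y > 0 \<Longrightarrow> (g has_real_derivative g' y) (at y)"
    and d2: "\<And>y. y > 0 \<Longrightarrow> (g' has_real_derivative g'' y) (at y)"
    and strict: "\<And>y. y > 0 \<Longrightarrow> g'' y > 0"
    and A: "finite A"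
    and pp: "\<And>i. i \<in> A \<Longrightarrow> p i > 0" and ps: "sum p A = 1"
    and xp: "\<And>i. i \<in> A \<Longrightarrow> x i > 0"
    and ne: "\<exists>i\<in>A. \<exists>j\<in>A. x i \<noteq> x j"
  shows "g (\<Sum>i\<in>A. p i * x i) < (\<Sum>i\<in>A. p i * g (x i))"
proof -
  define m where "m = (\<Sum>i\<in>A. p i * x i)"
  have mpos: "m > 0" unfolding m_def using ne by (intro weighted_mean_pos[OF A _ pp xp]) auto
  obtain k where k: "k \<in> A" "x k \<noteq> m" using ne by metis
  have convex: "g'' y \<ge> 0" if "y > 0" for y using strict[OF that] by simp
  have "g m = (\<Sum>i\<in>A. p i * (g m + g' m * (x i - m)))"
    using weighted_mean_affine[OF ps m_def] by simp
  also have "\<dots> < (\<Sum>i\<in>A. p i * g (x i))"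
  proof (rule sum_strict_mono_ex1[OF A])
    show "\<forall>i\<in>A. p i * (g m + g' m * (x i - m)) \<le> p i * g (x i)"
      using above_tangent[OF d1 d2 convex mpos xp] pp by (auto intro: mult_left_mono simp: less_imp_le)
    show "\<exists>i\<in>A. p i * (g m + g' m * (x i - m)) < p i * g (x i)"
      using strictly_above_tangent[OF d1 d2 strict mpos xp[OF k(1)] k(2)] pp[OF k(1)]
      by (intro bexI[OF _ k(1)] mult_strict_left_mono)
  qed
  finally show ?thesis unfolding m_def .
qed

section \<open>The kernel of chi and its derivatives\<close>

text \<open>chi_s is the Jensen gap of this kernel, whose second derivative is y powr (s - 2).\<close>
definition chi_kernel :: "real \<Rightarrow> real \<Rightarrow> real" where
  "chi_kernel s y =
    (if s = 0 then - ln y else if s = 1 then y * ln y else y powr s / (s * (s - 1)))"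

definition chi_kernel_deriv :: "real \<Rightarrow> real \<Rightarrow> real" where
  "chi_kernel_deriv s y =
    (if s = 0 then - 1 / y else if s = 1 then ln y + 1 else y powr (s - 1) / (s - 1))"

lemma chi_kernel_has_derivative:
  assumes y: "y > 0"
  shows "(chi_kernel s has_real_derivative chi_kernel_deriv s y) (at y)"
proof -
  consider "s = 0" | "s = 1" | "s \<noteq> 0" "s \<noteq> 1" by blast
  then show ?thesis
  proof cases
    case 3
    have "((\<lambda>y. y powr s / (s * (s - 1))) has_real_derivative (s * y powr (s - 1)) / (s * (s - 1))) (at y)"
      by (rule DERIV_cdivide[OF has_real_derivative_powr]) (use y in simp)
    then show ?thesis unfolding chi_kernel_def[abs_def] chi_kernel_deriv_def using 3 by simp
  qed (use y in \<open>auto intro!: derivative_eq_intros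
         simp: chi_kernel_def[abs_def] chi_kernel_deriv_def field_simps\<close>)
qed

lemma chi_kernel_deriv_has_derivative:
  assumes y: "y > 0"
  shows "(chi_kernel_deriv s has_real_derivative y powr (s - 2)) (at y)"
proof -
  consider "s = 0" | "s = 1" | "s \<noteq> 0" "s \<noteq> 1" by blast
  then show ?thesis
  proof cases
    case 1
    have "((\<lambda>y. - 1 / y) has_real_derivative 1 / y^2) (at y)"
      using y by (auto intro!: derivative_eq_intros simp: field_simps power2_eq_square)
    moreover have "y powr (0 - 2) = 1 / y^2"
      using y by (simp add: powr_minus powr_numeral divide_inverse)
    ultimately show ?thesis unfolding chi_kernel_deriv_def[abs_def] using 1 by simp
  next
    case 2
    have "((\<lambda>y. ln y + 1) has_real_derivative 1 / y) (at y)"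
      using y by (auto intro!: derivative_eq_intros)
    moreover have "y powr (1 - 2) = 1 / y" using y by (simp add: powr_minus divide_inverse)
    ultimately show ?thesis unfolding chi_kernel_deriv_def[abs_def] using 2 by simp
  next
    case 3
    have "((\<lambda>y. y powr (s - 1) / (s - 1)) has_real_derivative ((s - 1) * y powr (s - 1 - 1)) / (s - 1)) (at y)"
      by (rule DERIV_cdivide[OF has_real_derivative_powr]) (use y in simp)
    then show ?thesis unfolding chi_kernel_deriv_def[abs_def] using 3 by simp
  qed
qed

lemma chi_as_jensen_gap:
  "chi n p x s = (\<Sum>i=1..n. p i * chi_kernel s (x i)) - chi_kernel s (\<Sum>i=1..n. p i * x i)"
  unfolding chi_def chi_kernel_def
  by (auto simp: sum_negf sum_divide_distrib[symmetric] diff_divide_distrib mult.assoc)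

text \<open>Weighted AM-GM on the second derivatives: with A^l B^(1-l) = 1, the power with the
  interpolated exponent is dominated by the weighted combination of the two powers.
  This is what makes the kernel combination in the log-convexity proof convex.\<close>
lemma powr_interpolation_le:
  fixes a b l A B y :: real
  assumes l: "0 < l" "l < 1" and AB: "A > 0" "B > 0" "A powr l * B powr (1 - l) = 1"
    and y: "y > 0"
  shows "y powr (l * a + (1 - l) * b - 2) \<le> l * A * y powr (a - 2) + (1 - l) * B * y powr (b - 2)"
proof -
  have "y powr (l * a + (1 - l) * b - 2) = y powr ((a - 2) * l) * y powr ((b - 2) * (1 - l))"
    by (simp add: powr_add[symmetric] algebra_simps)
  also have "\<dots> = (A powr l * B powr (1 - l)) * (y powr ((a - 2) * l) * y powr ((b - 2) * (1 - l)))"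
    using AB(3) by simp
  also have "\<dots> = (A * y powr (a - 2)) powr l * (B * y powr (b - 2)) powr (1 - l)"
    using y AB by (simp add: powr_mult powr_powr)
  also have "\<dots> \<le> l * (A * y powr (a - 2)) + (1 - l) * (B * y powr (b - 2))"
    using l y AB by (intro Youngs_inequality_0) auto
  finally show ?thesis by (simp add: mult.assoc)
qed

section \<open>Positivity and log-convexity of chi\<close>

context
  fixes n :: nat and p x :: "nat \<Rightarrow> real"
  assumes pp: "\<And>i. i \<in> {1..n} \<Longrightarrow> p i > 0"
    and ps: "(\<Sum>i=1..n. p i) = 1"
    and xp: "\<And>i. i \<in> {1..n} \<Longrightarrow> x i > 0"
    and ne: "\<exists>i\<in>{1..n}. \<exists>j\<in>{1..n}. x i \<noteq> x j"
begin

lemma chi_pos: "chi n p x s > 0"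
  using jensen_second_derivative_strict[OF chi_kernel_has_derivative
      chi_kernel_deriv_has_derivative _ _ pp ps xp ne]
  unfolding chi_as_jensen_gap by simp

text \<open>Log-convexity of s \<mapsto> chi_s: apply Jensen to
  G = l A phi_a + (1-l) B phi_b - phi_m  with  A = K/chi_a, B = K/chi_b, K = chi_a^l chi_b^(1-l);
  its Jensen gap equals  l A chi_a + (1-l) B chi_b - chi_m = K - chi_m.\<close>
lemma chi_log_convex:
  assumes l: "0 < l" "l < 1"
  shows "chi n p x (l * a + (1 - l) * b) \<le> chi n p x a powr l * chi n p x b powr (1 - l)"
proof -
  define m where "m = l * a + (1 - l) * b"
  define K where "K = chi n p x a powr l * chi n p x b powr (1 - l)"
  define A where "A = K / chi n p x a"
  define B where "B = K / chi n p x b"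
  have Ca: "chi n p x a > 0" and Cb: "chi n p x b > 0" by (fact chi_pos)+
  have K: "K > 0" unfolding K_def using Ca Cb by simp
  have AB: "A > 0" "B > 0" "A powr l * B powr (1 - l) = 1"
    unfolding A_def B_def using Ca Cb K
    by (simp_all add: powr_divide powr_add[symmetric] K_def[symmetric])
  define G where "G y = l * A * chi_kernel a y + (1 - l) * B * chi_kernel b y - chi_kernel m y" for y
  define G' where
    "G' y = l * A * chi_kernel_deriv a y + (1 - l) * B * chi_kernel_deriv b y - chi_kernel_deriv m y" for y
  define G'' where
    "G'' y = l * A * y powr (a - 2) + (1 - l) * B * y powr (b - 2) - y powr (m - 2)" for y
  have dG: "(G has_real_derivative G' y) (at y)" if "y > 0" for y
    unfolding G_def[abs_def] G'_def using that
    by (intro DERIV_diff DERIV_add DERIV_cmult chi_kernel_has_derivative)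
  have dG': "(G' has_real_derivative G'' y) (at y)" if "y > 0" for y
    unfolding G'_def[abs_def] G''_def using that
    by (intro DERIV_diff DERIV_add DERIV_cmult chi_kernel_deriv_has_derivative)
  have G_convex: "G'' y \<ge> 0" if "y > 0" for y
    using powr_interpolation_le[OF l AB that] unfolding G''_def m_def by simp
  have nonempty: "{1..n} \<noteq> {}" using ne by auto
  have "0 \<le> (\<Sum>i=1..n. p i * G (x i)) - G (\<Sum>i=1..n. p i * x i)"
    using jensen_second_derivative[OF dG dG' G_convex _ nonempty pp ps xp] by simp
  also have "\<dots> = l * (A * chi n p x a) + (1 - l) * (B * chi n p x b) - chi n p x m"
    unfolding G_def chi_as_jensen_gap
    by (simp add: algebra_simps sum.distrib sum_subtractf sum_distrib_left)
  also have "\<dots> = K - chi n p x m"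
    unfolding A_def B_def using Ca Cb by (simp add: algebra_simps)
  finally show ?thesis unfolding m_def K_def by simp
qed

end

section \<open>Consequences of log-convexity\<close>

lemma log_convex_symmetric_product:
  fixes f :: "real \<Rightarrow> real"
  assumes pos: "\<And>s. f s > 0"
    and log_convex: "\<And>l a b. 0 < l \<Longrightarrow> l < 1 \<Longrightarrow> f (l * a + (1 - l) * b) \<le> f a powr l * f b powr (1 - l)"
    and l: "0 < l" "l < 1"
  shows "f (l * a + (1 - l) * b) * f ((1 - l) * a + l * b) \<le> f a * f b"
proof -
  have "f (l * a + (1 - l) * b) * f ((1 - l) * a + (1 - (1 - l)) * b)
        \<le> (f a powr l * f b powr (1 - l)) * (f a powr (1 - l) * f b powr (1 - (1 - l)))"
    using log_convex[OF l] log_convex[of "1 - l"] l pos by (intro mult_mono) (auto intro: less_imp_le)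
  also have "\<dots> = (f a powr l * f a powr (1 - l)) * (f b powr (1 - l) * f b powr (1 - (1 - l)))"
    by (simp only: mult_ac)
  also have "\<dots> = f a powr (l + (1 - l)) * f b powr ((1 - l) + (1 - (1 - l)))"
    by (simp only: powr_add)
  finally show ?thesis using pos[of a] pos[of b] by simp
qed

lemma log_convex_shift_product:
  fixes f :: "real \<Rightarrow> real"
  assumes pos: "\<And>s. f s > 0"
    and log_convex: "\<And>l a b. 0 < l \<Longrightarrow> l < 1 \<Longrightarrow> f (l * a + (1 - l) * b) \<le> f a powr l * f b powr (1 - l)"
    and r: "r > 0"
  shows "f (s + 1) * f (s + r) \<le> f s * f (s + r + 1)"
proof -
  define l where "l = r / (r + 1)"
  have l: "0 < l" "l < 1" unfolding l_def using r by auto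
  have r1: "r + 1 \<noteq> 0" using r by simp
  have "l * s + (1 - l) * (s + r + 1) = s + 1" and "(1 - l) * s + l * (s + r + 1) = s + r"
    unfolding l_def using r1 by (simp_all add: divide_simps) (simp_all add: algebra_simps)
  then show ?thesis using log_convex_symmetric_product[OF pos log_convex l, of s "s + r + 1"] by simp
qed

lemma mono_shift_ratio:
  fixes f :: "real \<Rightarrow> real"
  assumes pos: "\<And>s. f s > 0"
    and product: "\<And>s r. r > 0 \<Longrightarrow> f (s + 1) * f (s + r) \<le> f s * f (s + r + 1)"
  shows "mono (\<lambda>s. f (s + 1) / f s)"
proof (rule monoI)
  fix s t :: real assume "s \<le> t"
  show "f (s + 1) / f s \<le> f (t + 1) / f t"
  proof (cases "s = t")
    case False
    with \<open>s \<le> t\<close> have "f (s + 1) * f t \<le> f s * f (t + 1)"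
      using product[of "t - s" s] by simp
    then show ?thesis using pos[of s] pos[of t] by (simp add: divide_simps mult.commute)
  qed simp
qed

theorem mainTheorem6:
  fixes n :: nat and p x :: "nat \<Rightarrow> real"
  assumes "n \<ge> 2"
    and "\<And>i. i \<in> {1..n} \<Longrightarrow> p i > 0"
    and "(\<Sum>i=1..n. p i) = 1"
    and "\<And>i. i \<in> {1..n} \<Longrightarrow> x i > 0"
    and "\<exists>i\<in>{1..n}. \<exists>j\<in>{1..n}. x i \<noteq> x j"
  shows "(\<forall>s. chi n p x s > 0)
         \<and> mono (\<lambda>s. chi n p x (s + 1) / chi n p x s)
         \<and> (\<forall>s r. r > 0 \<longrightarrow>
              chi n p x s * chi n p x (s + r + 1) \<ge> chi n p x (s + 1) * chi n p x (s + r))"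
proof -
  have pos: "\<And>s. chi n p x s > 0"
    using chi_pos assms(2-5) by blast
  have log_convex: "\<And>l a b. 0 < l \<Longrightarrow> l < 1 \<Longrightarrow>
      chi n p x (l * a + (1 - l) * b) \<le> chi n p x a powr l * chi n p x b powr (1 - l)"
    using chi_log_convex assms(2-5) by blast
  have product: "\<And>s r. r > 0 \<Longrightarrow>
      chi n p x (s + 1) * chi n p x (s + r) \<le> chi n p x s * chi n p x (s + r + 1)"
    by (rule log_convex_shift_product[OF pos log_convex])
  show ?thesis using pos product mono_shift_ratio[OF pos product] by auto
qed

end
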